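(* Let $g,h$ be complex-valued functions on the positive integers such that $g(n),h(n)=O(e^{cn})$ for some $c\ge0$. Define finite differences by $\Delta^0h(j)=h(j)$ and $\Delta^mh(j)=\Delta^{m-1}h(j+1)-\Delta^{m-1}h(j)$ for $m\ge1$, and let $G(z)=\sum_{n=1}^\infty g(n)z^{n-1}$. Then there is a disc centred at $z=0$ on which $$\sum_{n=1}^\infty g(n)h(n)z^{n-1}=\sum_{m=0}^\infty G^{(m)}(z)\,\Delta^mh(1)\,\frac{z^m}{m!}.$$ Similarly, if $g,h$ are complex-valued functions on the non-negative integers with $g(n),h(n)=O(e^{cn})$ and $\tilde G(z)=\sum_{n=0}^\infty g(n)z^n$, then on some disc centred at $0$, $$\sum_{n=0}^\infty g(n)h(n)z^n=\sum_{m=0}^\infty\tilde G^{(m)}(z)\,\Delta^mh(0)\,\frac{z^m}{m!}.$$ *)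

theory Defs
  imports "HOL-Analysis.Analysis" "HOL-Library.Landau_Symbols"
begin

fun fwd_diff :: "nat \<Rightarrow> (nat \<Rightarrow> complex) \<Rightarrow> nat \<Rightarrow> complex" where
  "fwd_diff 0 h j = h j"
| "fwd_diff (Suc m) h j = fwd_diff m h (Suc j) - fwd_diff m h j"

end

theory Submission
  imports Defs
begin

text \<open>Newton's forward formula h(n) = \<Sum>m\<le>n. C(n,m) \<Delta>^m h(0) turns
  \<Sum>n. g(n) h(n) z^n into a double series in n and m. Summing over n first, the inner sums
  \<Sum>n. g(n) C(n,m) z^n are G^(m)(z) z^m / m!. Absolute convergence justifies the exchange:
  if |g(n)|, |h(n)| \<le> K R^n then |\<Delta>^m h(0)| \<le> K (2R)^m, so the double series is dominated by
  the geometric series in R |z| (1 + 2R), which converges on a small disc around 0.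
  The sequences indexed from 1 are the shifted sequences n \<mapsto> g(n+1), h(n+1), and
  \<Delta>^m of the latter at 0 is \<Delta>^m h(1).\<close>

lemma bigO_exp_imp_power_bound:
  fixes f :: "nat \<Rightarrow> complex" and c :: real
  assumes "c \<ge> 0" and "(\<lambda>n. norm (f n)) \<in> O(\<lambda>n. exp (c * real n))"
  obtains K where "K \<ge> 0" "\<And>n. norm (f n) \<le> K * exp c ^ n"
proof -
  obtain C where C: "C > 0" "eventually (\<lambda>n. norm (norm (f n)) \<le> C * norm (exp (c * real n))) at_top"
    using landau_o.bigE[OF assms(2)] by blast
  then obtain N where N: "\<And>n. n \<ge> N \<Longrightarrow> norm (f n) \<le> C * exp c ^ n"
    by (auto simp: eventually_at_top_linorder exp_of_nat_mult[symmetric] mult.commute)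
  define K where "K = C + (\<Sum>i<N. norm (f i))"
  have "K \<ge> C" "C \<ge> 0" using C by (simp_all add: K_def sum_nonneg)
  have bound: "norm (f n) \<le> K * exp c ^ n" for n
  proof (cases "n \<ge> N")
    case True
    have "C * exp c ^ n \<le> K * exp c ^ n"
      using \<open>K \<ge> C\<close> by (intro mult_right_mono) simp_all
    then show ?thesis using N[OF True] by linarith
  next
    case False
    have "norm (f n) \<le> (\<Sum>i<N. norm (f i))"
      using False by (intro member_le_sum) auto
    also have "\<dots> \<le> K" using C by (simp add: K_def)
    also have "\<dots> \<le> K * exp c ^ n"
      using \<open>c \<ge> 0\<close> \<open>K \<ge> C\<close> \<open>C \<ge> 0\<close> by (simp add: mult_le_cancel_left1 one_le_power)
    finally show ?thesis .
  qed
  show thesis using that[OF _ bound] \<open>K \<ge> C\<close> \<open>C \<ge> 0\<close> by linarith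
qed

lemma fwd_diff_shift: "fwd_diff m (\<lambda>n. h (Suc n)) j = fwd_diff m h (Suc j)"
  by (induction m arbitrary: j) auto

lemma norm_fwd_diff_le:
  assumes "K \<ge> 0" and "R \<ge> 1" and "\<And>n. norm (h n) \<le> K * R ^ n"
  shows "norm (fwd_diff m h j) \<le> K * R ^ j * (2 * R) ^ m"
proof (induction m arbitrary: j)
  case 0
  then show ?case using assms(3) by simp
next
  case (Suc m)
  have "norm (fwd_diff (Suc m) h j) \<le> norm (fwd_diff m h (Suc j)) + norm (fwd_diff m h j)"
    by (simp add: norm_triangle_ineq4)
  also have "\<dots> \<le> K * R ^ j * (2 * R) ^ m * (R + 1)"
    using Suc.IH[of "Suc j"] Suc.IH[of j] by (simp add: algebra_simps)
  also have "\<dots> \<le> K * R ^ j * (2 * R) ^ m * (2 * R)"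
    using assms(1,2) by (intro mult_left_mono) auto
  finally show ?case by (simp add: algebra_simps)
qed

lemma sum_Suc_choose_mult:
  fixes a :: "nat \<Rightarrow> 'a::comm_semiring_1"
  shows "(\<Sum>m\<le>Suc n. of_nat (Suc n choose m) * a m) =
         (\<Sum>m\<le>n. of_nat (n choose m) * (a (Suc m) + a m))"
proof -
  have "(\<Sum>m\<le>Suc n. of_nat (Suc n choose m) * a m) =
        (\<Sum>m\<le>n. of_nat (n choose m) * a (Suc m)) +
        (a 0 + (\<Sum>m\<le>n. of_nat (n choose Suc m) * a (Suc m)))"
    by (subst sum.atMost_Suc_shift) (simp add: sum.distrib distrib_right add.left_commute)
  also have "a 0 + (\<Sum>m\<le>n. of_nat (n choose Suc m) * a (Suc m)) =
             (\<Sum>m\<le>Suc n. of_nat (n choose m) * a m)"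
    by (subst sum.atMost_Suc_shift) simp
  also have "\<dots> = (\<Sum>m\<le>n. of_nat (n choose m) * a m)"
    by (simp add: binomial_eq_0)
  finally show ?thesis by (simp add: sum.distrib distrib_left)
qed

lemma newton_forward_difference:
  "h (j + n) = (\<Sum>m\<le>n. of_nat (n choose m) * fwd_diff m h j)"
proof (induction n arbitrary: j)
  case 0
  then show ?case by simp
next
  case (Suc n)
  have "h (j + Suc n) = (\<Sum>m\<le>n. of_nat (n choose m) * fwd_diff m h (Suc j))"
    using Suc.IH[of "Suc j"] by simp
  also have "\<dots> = (\<Sum>m\<le>Suc n. of_nat (Suc n choose m) * fwd_diff m h j)"
    using sum_Suc_choose_mult[of n "\<lambda>m. fwd_diff m h j"] by simp
  finally show ?case .
qed

lemma fps_nth_deriv_funpow: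
  fixes F :: "'a::comm_semiring_1 fps"
  shows "fps_nth ((fps_deriv ^^ m) F) n = fps_nth F (n + m) * pochhammer (of_nat (n + 1)) m"
proof (induction m arbitrary: n)
  case 0
  then show ?case by simp
next
  case (Suc m)
  have "fps_nth ((fps_deriv ^^ Suc m) F) n = of_nat (n + 1) * fps_nth ((fps_deriv ^^ m) F) (Suc n)"
    by (simp add: fps_deriv_def)
  also have "\<dots> = fps_nth F (n + Suc m) * pochhammer (of_nat (n + 1)) (Suc m)"
    by (simp add: Suc.IH pochhammer_rec algebra_simps)
  finally show ?case .
qed

lemma fps_conv_radius_deriv_funpow:
  fixes F :: "'a::{banach, real_normed_field} fps"
  shows "fps_conv_radius F \<le> fps_conv_radius ((fps_deriv ^^ m) F)"
proof (induction m)
  case (Suc m)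
  then show ?case using fps_conv_radius_deriv[of "(fps_deriv ^^ m) F"] by simp
qed simp

lemma higher_deriv_eval_fps:
  fixes F :: "complex fps"
  assumes "norm z < fps_conv_radius F"
  shows "(deriv ^^ m) (eval_fps F) z = eval_fps ((fps_deriv ^^ m) F) z"
  using assms
proof (induction m arbitrary: z)
  case 0
  then show ?case by simp
next
  case (Suc m)
  have "eventually (\<lambda>w. w \<in> eball 0 (fps_conv_radius F)) (nhds z)"
    using Suc.prems by (intro eventually_nhds_in_open) auto
  hence "eventually (\<lambda>w. (deriv ^^ m) (eval_fps F) w = eval_fps ((fps_deriv ^^ m) F) w) (nhds z)"
    by eventually_elim (intro Suc.IH, simp)
  hence "(deriv ^^ Suc m) (eval_fps F) z = (deriv ^^ 1) (eval_fps ((fps_deriv ^^ m) F)) z"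
    using higher_deriv_cong_ev[of _ _ z z 1] by simp
  also have "\<dots> = eval_fps (fps_deriv ((fps_deriv ^^ m) F)) z"
    using Suc.prems fps_conv_radius_deriv_funpow[of F m]
    by (simp add: eval_fps_deriv less_le_trans)
  finally show ?case by simp
qed

lemma sums_choose_higher_deriv:
  fixes g :: "nat \<Rightarrow> complex"
  assumes "norm z < fps_conv_radius (Abs_fps g)"
  shows "(\<lambda>n. g n * of_nat (n choose m) * z ^ n) sums
           ((deriv ^^ m) (\<lambda>z. \<Sum>n. g n * z ^ n) z * z ^ m / fact m)"
proof -
  define F where "F = Abs_fps g"
  have G: "eval_fps F = (\<lambda>z. \<Sum>n. g n * z ^ n)"
    by (simp add: F_def eval_fps_def fun_eq_iff)
  have "(\<lambda>n. fps_nth ((fps_deriv ^^ m) F) n * z ^ n) sums eval_fps ((fps_deriv ^^ m) F) z"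
    using assms fps_conv_radius_deriv_funpow[of F m]
    by (intro sums_eval_fps) (auto simp: F_def intro: less_le_trans)
  hence "(\<lambda>n. fps_nth ((fps_deriv ^^ m) F) n * z ^ n * (z ^ m / fact m)) sums
           (eval_fps ((fps_deriv ^^ m) F) z * (z ^ m / fact m))"
    by (rule sums_mult2)
  moreover have "fps_nth ((fps_deriv ^^ m) F) n * z ^ n * (z ^ m / fact m) =
                 g (n + m) * of_nat ((n + m) choose m) * z ^ (n + m)" for n
  proof -
    have "pochhammer (of_nat (n + 1) :: complex) m / fact m = of_nat ((n + m) choose m)"
      by (simp add: binomial_gbinomial gbinomial_pochhammer' of_nat_add algebra_simps)
    thus ?thesis
      by (simp add: fps_nth_deriv_funpow F_def power_add field_simps)
  qed
  moreover have "(\<Sum>i<m. g i * of_nat (i choose m) * z ^ i) = 0"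
    by (intro sum.neutral) auto
  moreover have "eval_fps ((fps_deriv ^^ m) F) z = (deriv ^^ m) (\<lambda>z. \<Sum>n. g n * z ^ n) z"
    using assms higher_deriv_eval_fps[of z F m] unfolding G by (simp add: F_def)
  ultimately show ?thesis
    using sums_iff_shift[of "\<lambda>n. g n * of_nat (n choose m) * z ^ n" m] by simp
qed

lemma fps_conv_radius_ge_power_bound:
  fixes g :: "nat \<Rightarrow> complex"
  assumes "\<And>n. norm (g n) \<le> K * R ^ n" and "R \<ge> 0" and "r \<ge> 0" and "R * r < 1"
  shows "ereal r \<le> fps_conv_radius (Abs_fps g)"
proof -
  have "summable (\<lambda>n. norm (g n * complex_of_real r ^ n))"
  proof (rule summable_comparison_test')
    show "summable (\<lambda>n. K * (R * r) ^ n)"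
      using assms(2-4)
      by (intro summable_mult summable_geometric) (auto simp: mult_nonneg_nonneg zero_le_mult_iff)
    show "norm (norm (g n * complex_of_real r ^ n)) \<le> K * (R * r) ^ n" for n
      using mult_right_mono[OF assms(1)[of n], of "r ^ n"] assms(3)
      by (simp add: norm_mult norm_power power_mult_distrib mult.assoc)
  qed
  hence "norm (complex_of_real r) \<le> fps_conv_radius (Abs_fps g)"
    unfolding fps_conv_radius_def by (intro conv_radius_geI) (simp add: summable_norm_cancel)
  thus ?thesis using assms(3) by simp
qed

lemma sums_double_series_swap:
  fixes a :: "nat \<Rightarrow> nat \<Rightarrow> 'a::{banach, uniform_topological_group_add}"
  assumes abs: "(\<lambda>(n, m). norm (a n m)) summable_on UNIV \<times> UNIV"
    and rows: "\<And>n. (\<lambda>m. a n m) sums r n"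
    and cols: "\<And>m. (\<lambda>n. a n m) sums c m"
  shows "summable r" and "c sums suminf r"
proof -
  have has_sum_if_sums: "(f has_sum s) UNIV" if "f summable_on UNIV" "f sums s"
    for f :: "nat \<Rightarrow> 'a" and s
  proof -
    have "(f has_sum infsum f UNIV) UNIV" using that(1) by (rule has_sum_infsum)
    moreover have "infsum f UNIV = s"
      using has_sum_imp_sums[OF calculation] that(2) by (rule sums_unique2)
    ultimately show ?thesis by simp
  qed
  have summable: "(\<lambda>(n, m). a n m) summable_on UNIV \<times> UNIV"
    using abs_summable_summable[of "\<lambda>(n, m). a n m" "UNIV \<times> UNIV"] abs
    by (simp add: prod.case_distrib)
  define S where "S = infsum (\<lambda>(n, m). a n m) (UNIV \<times> UNIV)"
  have S: "((\<lambda>(n, m). a n m) has_sum S) (UNIV \<times> UNIV)"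
    unfolding S_def using summable by (rule has_sum_infsum)
  have S_swap: "((\<lambda>(m, n). a n m) has_sum S) (UNIV \<times> UNIV)"
    using S by (subst (asm) has_sum_swap) (simp add: case_prod_unfold)
  have "((\<lambda>m. a n m) has_sum r n) UNIV" for n
    using summable_on_SigmaD1[OF summable UNIV_I] rows by (rule has_sum_if_sums)
  hence "(r has_sum S) UNIV" by (intro has_sum_Sigma'[OF S]) simp
  hence r: "r sums S" by (rule has_sum_imp_sums)
  have "((\<lambda>n. a n m) has_sum c m) UNIV" for m
    using summable_on_SigmaD1[OF has_sum_imp_summable[OF S_swap] UNIV_I] cols by (rule has_sum_if_sums)
  hence "(c has_sum S) UNIV" by (intro has_sum_Sigma'[OF S_swap]) simp
  hence "c sums S" by (rule has_sum_imp_sums)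
  with r show "summable r" and "c sums suminf r" by (auto simp: sums_iff)
qed

lemma summable_on_binomial_majorant:
  fixes x y :: real
  assumes "x \<ge> 0" and "y \<ge> 0" and "x * (1 + y) < 1"
  shows "(\<lambda>(n, m). x ^ n * real (n choose m) * y ^ m) summable_on UNIV \<times> UNIV"
proof (rule summable_on_SigmaI[where g = "\<lambda>n. (x * (1 + y)) ^ n"])
  show "((\<lambda>m. case (n, m) of (n, m) \<Rightarrow> x ^ n * real (n choose m) * y ^ m)
          has_sum (x * (1 + y)) ^ n) UNIV" for n
  proof (rule has_sum_finite_neutralI[of "{..n}"])
    have "(x * (1 + y)) ^ n = x ^ n * (\<Sum>m\<le>n. real (n choose m) * y ^ m)"
      using binomial_ring[of y 1 n] by (simp add: add.commute power_mult_distrib)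
    then show "(x * (1 + y)) ^ n = (\<Sum>m\<in>{..n}. case (n, m) of (n, m) \<Rightarrow> x ^ n * real (n choose m) * y ^ m)"
      by (simp add: sum_distrib_left mult.assoc)
  qed auto
  have "summable (\<lambda>n. (x * (1 + y)) ^ n)"
    using assms by (intro summable_geometric) simp
  then show "(\<lambda>n. (x * (1 + y)) ^ n) summable_on UNIV"
    using assms by (subst summable_on_UNIV_nonneg_real_iff) auto
qed (use assms in auto)

lemma euler_transform_sums_at:
  fixes g h :: "nat \<Rightarrow> complex"
  assumes "R \<ge> 1" and "Kh \<ge> 0"
    and g_bound: "\<And>n. norm (g n) \<le> Kg * R ^ n" and h_bound: "\<And>n. norm (h n) \<le> Kh * R ^ n"
    and small: "R * norm z * (1 + 2 * R) < 1"
    and radius: "norm z < fps_conv_radius (Abs_fps g)"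
  shows "summable (\<lambda>n. g n * h n * z ^ n) \<and>
         (\<lambda>m. (deriv ^^ m) (\<lambda>z. \<Sum>n. g n * z ^ n) z * fwd_diff m h 0 * z ^ m / fact m)
           sums (\<Sum>n. g n * h n * z ^ n)"
proof -
  have "Kg \<ge> 0" using order_trans[OF norm_ge_zero g_bound[of 0]] by simp
  define x where "x = R * norm z"
  have majorant: "(\<lambda>(n, m). x ^ n * real (n choose m) * (2 * R) ^ m) summable_on UNIV \<times> UNIV"
    using assms(1) small by (intro summable_on_binomial_majorant) (auto simp: x_def)
  define a where "a n m = g n * of_nat (n choose m) * fwd_diff m h 0 * z ^ n" for n m
  have bound: "norm (a n m) \<le> Kg * Kh * (x ^ n * real (n choose m) * (2 * R) ^ m)" for n m
  proof -
    have "norm (a n m) = norm (g n) * real (n choose m) * norm (fwd_diff m h 0) * norm z ^ n"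
      by (simp add: a_def norm_mult norm_power)
    also have "\<dots> \<le> (Kg * R ^ n) * real (n choose m) * (Kh * (2 * R) ^ m) * norm z ^ n"
      using g_bound[of n] norm_fwd_diff_le[OF assms(2,1) h_bound, of m 0] \<open>Kg \<ge> 0\<close> assms(1,2)
      by (intro mult_mono) auto
    finally show ?thesis by (simp add: x_def power_mult_distrib algebra_simps)
  qed
  have "(\<lambda>p. norm ((\<lambda>(n, m). a n m) p)) summable_on UNIV \<times> UNIV"
    by (rule Infinite_Sum.abs_summable_on_comparison_test'[OF summable_on_cmult_right[OF majorant]])
       (use bound in \<open>auto split: prod.split\<close>)
  hence "(\<lambda>(n, m). norm (a n m)) summable_on UNIV \<times> UNIV"
    by (simp only: prod.case_distrib)
  moreover have "(\<lambda>m. a n m) sums (g n * h n * z ^ n)" for n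
  proof -
    have "g n * h n * z ^ n = (\<Sum>m\<le>n. a n m)"
      using newton_forward_difference[of h 0 n]
      by (simp add: a_def sum_distrib_left sum_distrib_right mult_ac)
    moreover have "a n m = 0" if "m \<notin> {..n}" for m
      using that by (simp add: a_def)
    ultimately show ?thesis using sums_finite[of "{..n}" "\<lambda>m. a n m"] by simp
  qed
  moreover have "(\<lambda>n. a n m) sums
      ((deriv ^^ m) (\<lambda>z. \<Sum>n. g n * z ^ n) z * fwd_diff m h 0 * z ^ m / fact m)" for m
    using sums_mult2[OF sums_choose_higher_deriv[OF radius], of m "fwd_diff m h 0"]
    by (simp add: a_def mult_ac)
  ultimately show ?thesis
    using sums_double_series_swap[of a "\<lambda>n. g n * h n * z ^ n"
        "\<lambda>m. (deriv ^^ m) (\<lambda>z. \<Sum>n. g n * z ^ n) z * fwd_diff m h 0 * z ^ m / fact m"]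
    by blast
qed

lemma euler_transform_sums:
  fixes g h :: "nat \<Rightarrow> complex"
  assumes "R \<ge> 1" and "Kh \<ge> 0"
    and g_bound: "\<And>n. norm (g n) \<le> Kg * R ^ n" and h_bound: "\<And>n. norm (h n) \<le> Kh * R ^ n"
  shows "\<exists>r>0. \<forall>z\<in>ball 0 r.
         summable (\<lambda>n. g n * h n * z ^ n) \<and>
         (\<lambda>m. (deriv ^^ m) (\<lambda>z. \<Sum>n. g n * z ^ n) z * fwd_diff m h 0 * z ^ m / fact m)
           sums (\<Sum>n. g n * h n * z ^ n)"
proof -
  define r where "r = 1 / (R * (1 + 2 * R))"
  have "r > 0" using assms(1) by (simp add: r_def)
  have "R * r = 1 / (1 + 2 * R)" using assms(1) by (simp add: r_def)
  hence radius: "ereal r \<le> fps_conv_radius (Abs_fps g)"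
    using assms(1) \<open>r > 0\<close> by (intro fps_conv_radius_ge_power_bound[OF g_bound]) auto
  have "summable (\<lambda>n. g n * h n * z ^ n) \<and>
         (\<lambda>m. (deriv ^^ m) (\<lambda>z. \<Sum>n. g n * z ^ n) z * fwd_diff m h 0 * z ^ m / fact m)
           sums (\<Sum>n. g n * h n * z ^ n)" if z: "norm z < r" for z :: complex
  proof (rule euler_transform_sums_at[OF assms])
    have "R * norm z * (1 + 2 * R) < R * r * (1 + 2 * R)"
      using z assms(1) by (intro mult_strict_right_mono mult_strict_left_mono) auto
    also have "\<dots> = 1" using assms(1) by (simp add: r_def)
    finally show "R * norm z * (1 + 2 * R) < 1" .
    show "norm z < fps_conv_radius (Abs_fps g)"
      using z by (intro order.strict_trans2[OF _ radius]) simp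
  qed
  with \<open>r > 0\<close> show ?thesis by auto
qed

theorem mainTheorem8:
  fixes g h g0 h0 :: "nat \<Rightarrow> complex" and c c0 :: real
  assumes "c \<ge> 0"
    and "(\<lambda>n. norm (g n)) \<in> O(\<lambda>n. exp (c * real n))"
    and "(\<lambda>n. norm (h n)) \<in> O(\<lambda>n. exp (c * real n))"
    and "c0 \<ge> 0"
    and "(\<lambda>n. norm (g0 n)) \<in> O(\<lambda>n. exp (c0 * real n))"
    and "(\<lambda>n. norm (h0 n)) \<in> O(\<lambda>n. exp (c0 * real n))"
  shows
    "(let G = (\<lambda>z. \<Sum>n. g (Suc n) * z ^ n) in
       \<exists>r>0. \<forall>z\<in>ball 0 r.
         summable (\<lambda>n. g (Suc n) * h (Suc n) * z ^ n) \<and>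
         (\<lambda>m. (deriv ^^ m) G z * fwd_diff m h 1 * z ^ m / fact m)
           sums (\<Sum>n. g (Suc n) * h (Suc n) * z ^ n))
     \<and>
     (let G0 = (\<lambda>z. \<Sum>n. g0 n * z ^ n) in
       \<exists>r>0. \<forall>z\<in>ball 0 r.
         summable (\<lambda>n. g0 n * h0 n * z ^ n) \<and>
         (\<lambda>m. (deriv ^^ m) G0 z * fwd_diff m h0 0 * z ^ m / fact m)
           sums (\<Sum>n. g0 n * h0 n * z ^ n))"
proof -
  obtain Kg where Kg: "\<And>n. norm (g n) \<le> Kg * exp c ^ n"
    using bigO_exp_imp_power_bound[OF assms(1,2)] by blast
  obtain Kh where Kh: "Kh \<ge> 0" "\<And>n. norm (h n) \<le> Kh * exp c ^ n"
    using bigO_exp_imp_power_bound[OF assms(1,3)] by blast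
  obtain Kg0 where Kg0: "\<And>n. norm (g0 n) \<le> Kg0 * exp c0 ^ n"
    using bigO_exp_imp_power_bound[OF assms(4,5)] by blast
  obtain Kh0 where Kh0: "Kh0 \<ge> 0" "\<And>n. norm (h0 n) \<le> Kh0 * exp c0 ^ n"
    using bigO_exp_imp_power_bound[OF assms(4,6)] by blast
  have shifted: "\<exists>r>0. \<forall>z\<in>ball 0 r.
         summable (\<lambda>n. g (Suc n) * h (Suc n) * z ^ n) \<and>
         (\<lambda>m. (deriv ^^ m) (\<lambda>z. \<Sum>n. g (Suc n) * z ^ n) z * fwd_diff m (\<lambda>n. h (Suc n)) 0 *
                z ^ m / fact m)
           sums (\<Sum>n. g (Suc n) * h (Suc n) * z ^ n)"
  proof (rule euler_transform_sums)
    show "norm (g (Suc n)) \<le> (Kg * exp c) * exp c ^ n" for n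
      using Kg[of "Suc n"] by (simp add: mult.assoc)
    show "norm (h (Suc n)) \<le> (Kh * exp c) * exp c ^ n" for n
      using Kh(2)[of "Suc n"] by (simp add: mult.assoc)
  qed (use assms(1) Kh(1) in auto)
  have unshifted: "\<exists>r>0. \<forall>z\<in>ball 0 r.
         summable (\<lambda>n. g0 n * h0 n * z ^ n) \<and>
         (\<lambda>m. (deriv ^^ m) (\<lambda>z. \<Sum>n. g0 n * z ^ n) z * fwd_diff m h0 0 * z ^ m / fact m)
           sums (\<Sum>n. g0 n * h0 n * z ^ n)"
    using assms(4) by (intro euler_transform_sums[OF _ Kh0(1) Kg0 Kh0(2)]) simp
  show ?thesis using shifted unshifted by (simp add: fwd_diff_shift Let_def)
qed

end
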